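(* Let $\mathcal{H}$ be a real Hilbert space, let $N\geq 1$, let $f_1,\ldots,f_N\in\Gamma_0(\mathcal{H})$, and let $\mathcal{P}\subset\Delta_N$ be a nonempty closed convex set. Define $f\colon\mathcal{H}^N\to\mathbb{R}\cup\{+\infty\}$ by $f(\mathbf{x})=\sup_{p\in\mathcal{P}}\sum_{i=1}^N p_i f_i(x_i)$ for $\mathbf{x}=(x_1,\ldots,x_N)$. Let $\mathbf{x}\in\mathcal{H}^N$ and $\lambda>0$. Then the following hold. (i) If for every $i\in\{1,\ldots,N\}$, $f_i(x)=\langle a_i,x\rangle+\xi_i$ with $a_i\in\mathcal{H}\setminus\{0\}$ and $\xi_i\in\mathbb{R}$, then the problem $\min_{p\in\mathcal{P}}\frac12 p^\top Dp-p^\top\beta$, where $D=\mathrm{diag}(\lambda\|a_1\|^2,\ldots,\lambda\|a_N\|^2)$ and $\beta=(\langle a_i,x_i\rangle+\xi_i)_{i=1}^N$, has a unique solution $\overline{p}\in\mathcal{P}$, and $P_\lambda f(\mathbf{x})=(x_i-\lambda\overline{p}_i a_i)_{i=1}^N$. (ii) If $\mathcal{P}=\Delta_N$ and for every $i\in\{1,\ldots,N\}$, $f_i(x)=\|x-\xi_i\|^2$ with $\xi_i\in\mathcal{H}$, then $P_\lambda f(\mathbf{x})=\left(\frac{x_i+2\lambda\overline{p}_i\xi_i}{2\lambda\overline{p}_i+1}\right)_{i=1}^N$, where $\overline{p}\in\Delta_N$ is any solution of $\max_{p\in\Delta_N}\ell(p):=\sum_{i=1}^N\frac{p_i}{1+2\lambda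 p_i}\alpha_i$ with $\alpha_i=\|x_i-\xi_i\|^2$ for every $i$.
   Context: $\Gamma_0(\mathcal{H})$ is the set of proper, lower semicontinuous, convex functions $\mathcal{H}\to\mathbb{R}\cup\{+\infty\}$. $\Delta_N=\{p\in\mathbb{R}_+^N:\sum_{i=1}^Np_i=1\}$. For $g\in\Gamma_0(\mathcal{G})$ and $\lambda>0$, the proximity operator is $P_\lambda g(x)=\operatorname{argmin}_{y}\{g(y)+\frac{1}{2\lambda}\|x-y\|^2\}$. $\mathcal{H}^N$ carries the product Hilbert structure. *)

theory Defs
  imports "HOL-Analysis.Analysis"
begin

definition proper_fun :: "('a \<Rightarrow> ereal) \<Rightarrow> bool" where
  "proper_fun g \<longleftrightarrow> (\<forall>x. g x \<noteq> -\<infinity>) \<and> (\<exists>x. g x \<noteq> \<infinity>)"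

definition lsc_fun :: "('a::topological_space \<Rightarrow> ereal) \<Rightarrow> bool" where
  "lsc_fun g \<longleftrightarrow> (\<forall>x. \<forall>c. c < g x \<longrightarrow> eventually (\<lambda>y. c < g y) (nhds x))"

definition convex_fun :: "('a::real_vector \<Rightarrow> ereal) \<Rightarrow> bool" where
  "convex_fun g \<longleftrightarrow> (\<forall>x y t. 0 \<le> t \<and> t \<le> 1 \<longrightarrow>
      g ((1 - t) *\<^sub>R x + t *\<^sub>R y) \<le> ereal (1 - t) * g x + ereal t * g y)"

definition Gamma0 :: "('a::real_normed_vector \<Rightarrow> ereal) \<Rightarrow> bool" where
  "Gamma0 g \<longleftrightarrow> proper_fun g \<and> lsc_fun g \<and> convex_fun g"

text \<open>The probability simplex \<Delta>_N, with N = CARD('n).\<close>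
definition simplex_set :: "(real ^ 'n::finite) set" where
  "simplex_set = {p. (\<forall>i. 0 \<le> p $ i) \<and> (\<Sum>i\<in>UNIV. p $ i) = 1}"

definition prox :: "real \<Rightarrow> ('a::real_inner \<Rightarrow> ereal) \<Rightarrow> 'a \<Rightarrow> 'a" where
  "prox lam g x = (THE y. \<forall>z. g y + ereal (norm (x - y)^2 / (2 * lam))
                              \<le> g z + ereal (norm (x - z)^2 / (2 * lam)))"

end

theory Submission
  imports Defs
begin

(* If some weight pb \<in> P is a saddle point, i.e. y is the proximal point at x of
   \<Sum>i. pb_i f_i and pb maximises p \<mapsto> \<Sum>i. p_i f_i(y_i) over P, then y is the proximal
   point of F at x: the weighted function is a minorant of F touching it at y, and its strong
   convexity around y (a three-point inequality) makes y the unique minimiser of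
   F + \<parallel>x - \<cdot>\<parallel>^2/(2 lam).  For both families of f_i the proximal point of the weighted
   function is explicit, and the maximality of pb at y is exactly the first-order optimality
   condition of the stated finite-dimensional problem: the quadratic program in (i), the
   maximisation of ell in (ii). *)

lemma convex_argmin_derivative_nonneg:
  fixes g :: "'a::real_normed_vector \<Rightarrow> real"
  assumes deriv: "(g has_derivative g') (at p0)"
    and S: "convex S" "p0 \<in> S" "p \<in> S" and min: "\<forall>q\<in>S. g p0 \<le> g q"
  shows "0 \<le> g' (p - p0)"
proof -
  define h where "h t = g (p0 + t *\<^sub>R (p - p0))" for t :: real
  have "((\<lambda>t. p0 + t *\<^sub>R (p - p0)) has_derivative (\<lambda>t. t *\<^sub>R (p - p0))) (at 0)"
    by (auto intro!: derivative_eq_intros)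
  moreover have "(g has_derivative g') (at (p0 + 0 *\<^sub>R (p - p0)))"
    using deriv by simp
  ultimately have "(h has_derivative (\<lambda>t. g' (t *\<^sub>R (p - p0)))) (at 0)"
    unfolding h_def by (rule has_derivative_compose)
  moreover have "(\<lambda>t. g' (t *\<^sub>R (p - p0))) = (*) (g' (p - p0))"
    using has_derivative_linear[OF deriv] by (simp add: fun_eq_iff linear_scale)
  ultimately have "(h has_real_derivative g' (p - p0)) (at_right 0)"
    by (simp add: has_field_derivative_def has_derivative_at_withinI)
  then have lim: "((\<lambda>t. (h t - h 0) / t) \<longlongrightarrow> g' (p - p0)) (at_right 0)"
    by (simp add: has_field_derivative_iff)
  have "\<forall>\<^sub>F t in at_right 0. 0 \<le> (h t - h 0) / t"
    unfolding eventually_at_right_field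
  proof (intro exI[of _ 1] conjI allI impI)
    fix t :: real assume "0 < t" "t < 1"
    then have "p0 + t *\<^sub>R (p - p0) \<in> S"
      using convexD[OF S(1,2,3), of "1 - t" t] by (simp add: algebra_simps)
    then show "0 \<le> (h t - h 0) / t"
      using min \<open>0 < t\<close> by (simp add: h_def)
  qed simp
  with lim show ?thesis
    by (rule tendsto_lowerbound) simp
qed

lemma has_derivative_sum_components:
  fixes g :: "'n::finite \<Rightarrow> real \<Rightarrow> real"
  assumes "\<And>i. (g i has_real_derivative g' i) (at (p $ i))"
  shows "((\<lambda>q. \<Sum>i\<in>UNIV. g i (q $ i)) has_derivative (\<lambda>h. \<Sum>i\<in>UNIV. g' i * h $ i)) (at p)"
proof (rule has_derivative_sum)
  fix i
  have "((\<lambda>q. q $ i) has_derivative (\<lambda>h. h $ i)) (at p)"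
    by (rule bounded_linear_imp_has_derivative) (rule bounded_linear_vec_nth)
  from has_derivative_compose[OF this assms[of i, unfolded has_field_derivative_def]]
  show "((\<lambda>q. g i (q $ i)) has_derivative (\<lambda>h. g' i * h $ i)) (at p)"
    by (simp add: o_def)
qed

lemma separable_argmin_variational_ineq:
  fixes g :: "'n::finite \<Rightarrow> real \<Rightarrow> real"
  assumes "\<And>i. (g i has_real_derivative g' i) (at (p0 $ i))"
    and "convex S" "p0 \<in> S" "p \<in> S"
    and "\<forall>q\<in>S. (\<Sum>i\<in>UNIV. g i (p0 $ i)) \<le> (\<Sum>i\<in>UNIV. g i (q $ i))"
  shows "0 \<le> (\<Sum>i\<in>UNIV. g' i * (p $ i - p0 $ i))"
  using convex_argmin_derivative_nonneg[OF has_derivative_sum_components[OF assms(1)] assms(2-)]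
  by simp

lemma inner_diagonal_matrix_vector:
  "p \<bullet> ((\<chi> i j. if i = j then d i else 0) *v p) = (\<Sum>i\<in>UNIV. d i * (p $ i)^2)"
proof -
  have "(if i = j then d i else 0) * p $ j = (if i = j then d i * p $ i else 0)" for i j
    by simp
  then show ?thesis
    by (simp add: inner_vec_def matrix_vector_mult_def power2_eq_square algebra_simps)
qed

lemma diagonal_quadratic_argmin_variational:
  fixes S :: "(real ^ 'n::finite) set"
  assumes S: "convex S" and Q: "Q = (\<lambda>p. \<Sum>i\<in>UNIV. w i / 2 * (p $ i)^2 - b i * p $ i)"
    and p0: "p0 \<in> S" "\<forall>q\<in>S. Q p0 \<le> Q q" and p: "p \<in> S"
  shows "0 \<le> (\<Sum>i\<in>UNIV. (w i * p0 $ i - b i) * (p $ i - p0 $ i))"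
proof (rule separable_argmin_variational_ineq[where g = "\<lambda>i s. w i / 2 * s^2 - b i * s",
      OF _ S p0(1) p])
  show "\<forall>q\<in>S. (\<Sum>i\<in>UNIV. w i / 2 * (p0 $ i)^2 - b i * p0 $ i)
                \<le> (\<Sum>i\<in>UNIV. w i / 2 * (q $ i)^2 - b i * q $ i)"
    using p0(2) unfolding Q .
next
  show "((\<lambda>s. w i / 2 * s^2 - b i * s) has_real_derivative w i * p0 $ i - b i) (at (p0 $ i))" for i
    by (auto intro!: derivative_eq_intros)
qed

lemma diagonal_quadratic_argmin_unique:
  fixes S :: "(real ^ 'n::finite) set"
  assumes S: "convex S" and w: "\<And>i. w i > 0"
    and Q: "Q = (\<lambda>p. \<Sum>i\<in>UNIV. w i / 2 * (p $ i)^2 - b i * p $ i)"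
    and p: "p \<in> S" "\<forall>q\<in>S. Q p \<le> Q q" and p': "p' \<in> S" "\<forall>q\<in>S. Q p' \<le> Q q"
  shows "p' = p"
proof -
  have "0 \<le> (\<Sum>i\<in>UNIV. (w i * p $ i - b i) * (p' $ i - p $ i))"
      "0 \<le> (\<Sum>i\<in>UNIV. (w i * p' $ i - b i) * (p $ i - p' $ i))"
    using diagonal_quadratic_argmin_variational[OF S Q] p p' by blast+
  then have "0 \<le> (\<Sum>i\<in>UNIV. (w i * p $ i - b i) * (p' $ i - p $ i))
            + (\<Sum>i\<in>UNIV. (w i * p' $ i - b i) * (p $ i - p' $ i))"
    by simp
  also have "\<dots> = - (\<Sum>i\<in>UNIV. w i * (p' $ i - p $ i)^2)"
    unfolding sum.distrib[symmetric] sum_negf[symmetric]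
    by (rule sum.cong) (simp_all add: power2_eq_square algebra_simps)
  finally have "(\<Sum>i\<in>UNIV. w i * (p' $ i - p $ i)^2) \<le> 0"
    by simp
  moreover have nonneg: "0 \<le> w i * (p' $ i - p $ i)^2" for i
    using w[of i] by simp
  moreover have "0 \<le> (\<Sum>i\<in>UNIV. w i * (p' $ i - p $ i)^2)"
    by (rule sum_nonneg) (rule nonneg)
  ultimately have "(\<Sum>i\<in>UNIV. w i * (p' $ i - p $ i)^2) = 0"
    by linarith
  then have zero: "w i * (p' $ i - p $ i)^2 = 0" for i
    using sum_nonneg_eq_0_iff[of UNIV "\<lambda>i. w i * (p' $ i - p $ i)^2"] nonneg by auto
  have "p' $ i = p $ i" for i
    using zero[of i] order_less_imp_not_eq2[OF w[of i]] by simp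
  then show ?thesis
    by (simp add: vec_eq_iff)
qed

lemma diagonal_quadratic_argmin_ex1:
  fixes S :: "(real ^ 'n::finite) set"
  assumes S: "compact S" "convex S" "S \<noteq> {}" and w: "\<And>i. w i > 0"
    and Q: "Q = (\<lambda>p. \<Sum>i\<in>UNIV. w i / 2 * (p $ i)^2 - b i * p $ i)"
  shows "\<exists>!p. p \<in> S \<and> (\<forall>q\<in>S. Q p \<le> Q q)"
proof -
  have "continuous_on S Q"
    unfolding Q by (intro continuous_intros)
  then obtain p where "p \<in> S" "\<forall>q\<in>S. Q p \<le> Q q"
    using continuous_attains_inf[OF S(1,3)] by blast
  then show ?thesis
    using diagonal_quadratic_argmin_unique[OF S(2) w Q] by blast
qed

lemma prox_eqI:
  fixes F :: "'a::real_inner \<Rightarrow> ereal" and g :: "'a \<Rightarrow> real"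
  assumes lam: "lam > 0"
    and minorant: "\<And>z. ereal (g z) \<le> F z" and touch: "F y \<le> ereal (g y)"
    and three_point: "\<And>z. g y + norm (x - y)^2 / (2*lam) + norm (z - y)^2 / (2*lam)
                          \<le> g z + norm (x - z)^2 / (2*lam)"
  shows "prox lam F x = y"
proof -
  have Fy: "F y = ereal (g y)"
    using minorant[of y] touch by (rule antisym[rotated])
  have key: "ereal (g y + norm (x - y)^2 / (2*lam) + norm (z - y)^2 / (2*lam))
      \<le> F z + ereal (norm (x - z)^2 / (2*lam))" for z
  proof -
    have "ereal (g y + norm (x - y)^2 / (2*lam) + norm (z - y)^2 / (2*lam))
        \<le> ereal (g z) + ereal (norm (x - z)^2 / (2*lam))"
      using three_point[of z] by simp
    also have "\<dots> \<le> F z + ereal (norm (x - z)^2 / (2*lam))"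
      by (intro add_right_mono minorant)
    finally show ?thesis .
  qed
  show ?thesis
    unfolding prox_def
  proof (rule the_equality)
    show "\<forall>z. F y + ereal (norm (x - y)^2 / (2*lam)) \<le> F z + ereal (norm (x - z)^2 / (2*lam))"
    proof
      fix z
      have "0 \<le> norm (z - y)^2 / (2*lam)"
        using lam by simp
      then have "F y + ereal (norm (x - y)^2 / (2*lam))
          \<le> ereal (g y + norm (x - y)^2 / (2*lam) + norm (z - y)^2 / (2*lam))"
        by (simp add: Fy)
      also have "\<dots> \<le> F z + ereal (norm (x - z)^2 / (2*lam))"
        by (rule key)
      finally show "F y + ereal (norm (x - y)^2 / (2*lam)) \<le> F z + ereal (norm (x - z)^2 / (2*lam))" .
    qed
  next
    fix y'
    assume "\<forall>z. F y' + ereal (norm (x - y')^2 / (2*lam)) \<le> F z + ereal (norm (x - z)^2 / (2*lam))"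
    then have "F y' + ereal (norm (x - y')^2 / (2*lam)) \<le> ereal (g y + norm (x - y)^2 / (2*lam))"
      by (metis Fy plus_ereal.simps(1))
    with key[of y'] have "ereal (g y + norm (x - y)^2 / (2*lam) + norm (y' - y)^2 / (2*lam))
        \<le> ereal (g y + norm (x - y)^2 / (2*lam))"
      by (rule order_trans)
    then have "norm (y' - y)^2 \<le> 0"
      using lam by (simp add: divide_le_0_iff)
    then show "y' = y" by simp
  qed
qed

lemma norm_vec_power2: "norm (v :: 'a::real_inner ^ 'n)^2 = (\<Sum>i\<in>UNIV. norm (v $ i)^2)"
  by (simp add: power2_norm_eq_inner inner_vec_def)

lemma prox_weighted_sup_eqI:
  fixes f :: "'n::finite \<Rightarrow> 'a::real_inner \<Rightarrow> ereal" and g :: "'n \<Rightarrow> 'a \<Rightarrow> real"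
    and x y :: "'a ^ 'n"
  assumes lam: "lam > 0"
    and F: "F = (\<lambda>y. SUP p\<in>P. \<Sum>i\<in>UNIV. ereal (p $ i) * f i (y $ i))"
    and f: "\<And>i. f i = (\<lambda>z. ereal (g i z))"
    and pb: "pb \<in> P"
    and saddle: "\<And>p. p \<in> P \<Longrightarrow>
      (\<Sum>i\<in>UNIV. p $ i * g i (y $ i)) \<le> (\<Sum>i\<in>UNIV. pb $ i * g i (y $ i))"
    and three_point: "\<And>i z. pb $ i * g i (y $ i) + norm (x $ i - y $ i)^2 / (2*lam)
                              + norm (z - y $ i)^2 / (2*lam)
                            \<le> pb $ i * g i z + norm (x $ i - z)^2 / (2*lam)"
  shows "prox lam F x = y"
proof (rule prox_eqI[OF lam, where g = "\<lambda>z. \<Sum>i\<in>UNIV. pb $ i * g i (z $ i)"])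
  have F_eq: "F z = (SUP p\<in>P. ereal (\<Sum>i\<in>UNIV. p $ i * g i (z $ i)))" for z
    by (simp add: F f)
  show "ereal (\<Sum>i\<in>UNIV. pb $ i * g i (z $ i)) \<le> F z" for z
    unfolding F_eq using pb by (rule SUP_upper)
  show "F y \<le> ereal (\<Sum>i\<in>UNIV. pb $ i * g i (y $ i))"
    unfolding F_eq by (rule SUP_least) (simp add: saddle)
  show "(\<Sum>i\<in>UNIV. pb $ i * g i (y $ i)) + norm (x - y)^2 / (2*lam) + norm (z - y)^2 / (2*lam)
      \<le> (\<Sum>i\<in>UNIV. pb $ i * g i (z $ i)) + norm (x - z)^2 / (2*lam)" for z
    using sum_mono[of UNIV, OF three_point[of _ "z $ _"]]
    by (simp add: norm_vec_power2 sum.distrib sum_divide_distrib)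
qed

lemma affine_prox_three_point:
  fixes x y z a :: "'a::real_inner"
  assumes lam: "lam > 0" and y: "y = x - (lam * p) *\<^sub>R a"
  shows "p * (inner a y + s) + norm (x - y)^2 / (2*lam) + norm (z - y)^2 / (2*lam)
       = p * (inner a z + s) + norm (x - z)^2 / (2*lam)"
proof -
  have "norm (x - z)^2 = norm (x - y)^2 + 2 * inner (x - y) (y - z) + norm (z - y)^2"
    by (simp add: power2_norm_eq_inner inner_diff_left inner_diff_right inner_commute)
  moreover have "inner (x - y) (y - z) = lam * p * (inner a y - inner a z)"
    by (simp add: y inner_diff_right algebra_simps)
  ultimately show ?thesis
    using lam by (simp add: field_simps)
qed

lemma prox_weighted_sup_affine_at_argmin:
  fixes f :: "'n::finite \<Rightarrow> 'a::real_inner \<Rightarrow> ereal" and a :: "'n \<Rightarrow> 'a" and x :: "'a ^ 'n"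
  assumes lam: "lam > 0"
    and F: "F = (\<lambda>y. SUP p\<in>P. \<Sum>i\<in>UNIV. ereal (p $ i) * f i (y $ i))"
    and f: "\<And>i. f i = (\<lambda>z. ereal (inner (a i) z + \<xi> i))"
    and Q: "Q = (\<lambda>p. \<Sum>i\<in>UNIV.
                 lam * norm (a i)^2 / 2 * (p $ i)^2 - (inner (a i) (x $ i) + \<xi> i) * p $ i)"
    and P: "convex P" and pb: "pb \<in> P" "\<forall>p\<in>P. Q pb \<le> Q p"
  shows "prox lam F x = (\<chi> i. x $ i - (lam * pb $ i) *\<^sub>R a i)"
proof -
  define y where "y = (\<chi> i. x $ i - (lam * pb $ i) *\<^sub>R a i)"
  define r where "r i = inner (a i) (y $ i) + \<xi> i" for i
  have r: "r i = (inner (a i) (x $ i) + \<xi> i) - lam * norm (a i)^2 * pb $ i" for i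
    by (simp add: r_def y_def inner_diff_right power2_norm_eq_inner)
  have "prox lam F x = y"
  proof (rule prox_weighted_sup_eqI[OF lam F f pb(1)])
    fix p assume "p \<in> P"
    with diagonal_quadratic_argmin_variational[OF P Q pb]
    have "0 \<le> (\<Sum>i\<in>UNIV.
        (lam * norm (a i)^2 * pb $ i - (inner (a i) (x $ i) + \<xi> i)) * (p $ i - pb $ i))" .
    also have "\<dots> = (\<Sum>i\<in>UNIV. pb $ i * r i) - (\<Sum>i\<in>UNIV. p $ i * r i)"
      unfolding r sum_subtractf[symmetric] by (rule sum.cong) (simp_all add: algebra_simps)
    finally show "(\<Sum>i\<in>UNIV. p $ i * (inner (a i) (y $ i) + \<xi> i))
        \<le> (\<Sum>i\<in>UNIV. pb $ i * (inner (a i) (y $ i) + \<xi> i))"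
      by (simp add: r_def)
  next
    fix i z
    show "pb $ i * (inner (a i) (y $ i) + \<xi> i) + norm (x $ i - y $ i)^2 / (2*lam)
          + norm (z - y $ i)^2 / (2*lam)
        \<le> pb $ i * (inner (a i) z + \<xi> i) + norm (x $ i - z)^2 / (2*lam)"
      using affine_prox_three_point[OF lam, of "y $ i" "x $ i" "pb $ i" "a i"] by (simp add: y_def)
  qed
  then show ?thesis
    by (simp add: y_def)
qed

lemma prox_weighted_sup_affine:
  fixes f :: "'n::finite \<Rightarrow> 'a::real_inner \<Rightarrow> ereal" and a :: "'n \<Rightarrow> 'a" and x :: "'a ^ 'n"
  assumes lam: "lam > 0"
    and F: "F = (\<lambda>y. SUP p\<in>P. \<Sum>i\<in>UNIV. ereal (p $ i) * f i (y $ i))"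
    and a: "\<And>i. a i \<noteq> 0" and f: "\<And>i. f i = (\<lambda>z. ereal (inner (a i) z + \<xi> i))"
    and P: "compact P" "convex P" "P \<noteq> {}"
  defines "q \<equiv> \<lambda>p. (1/2) * (p \<bullet> ((\<chi> i j. if i = j then lam * (norm (a i))^2 else 0) *v p))
                   - p \<bullet> (\<chi> i. inner (a i) (x $ i) + \<xi> i)"
  shows "\<exists>pb. (\<forall>p'. (p' \<in> P \<and> (\<forall>p\<in>P. q p' \<le> q p)) \<longleftrightarrow> p' = pb) \<and>
             prox lam F x = (\<chi> i. x $ i - (lam * pb $ i) *\<^sub>R a i)"
proof -
  define Q where "Q = (\<lambda>p :: real ^ 'n. \<Sum>i\<in>UNIV.
    lam * norm (a i)^2 / 2 * (p $ i)^2 - (inner (a i) (x $ i) + \<xi> i) * p $ i)"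
  have "q = Q"
    unfolding q_def Q_def fun_eq_iff inner_diagonal_matrix_vector
    by (simp add: inner_vec_def sum_distrib_left sum_subtractf algebra_simps)
  have "lam * norm (a i)^2 > 0" for i
    using a lam by simp
  then obtain pb where pb: "pb \<in> P" "\<forall>p\<in>P. Q pb \<le> Q p"
      and unique: "\<And>p'. p' \<in> P \<and> (\<forall>p\<in>P. Q p' \<le> Q p) \<Longrightarrow> p' = pb"
    using diagonal_quadratic_argmin_ex1[OF P _ Q_def] by metis
  have "prox lam F x = (\<chi> i. x $ i - (lam * pb $ i) *\<^sub>R a i)"
    by (rule prox_weighted_sup_affine_at_argmin[OF lam F f Q_def P(2) pb])
  with pb unique show ?thesis
    unfolding \<open>q = Q\<close> by blast
qed

lemma sq_dist_prox_diff:
  fixes x c :: "'a::real_vector"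
  assumes "2 * lam * p + 1 \<noteq> 0"
  shows "(1 / (2 * lam * p + 1)) *\<^sub>R (x + (2 * lam * p) *\<^sub>R c) - c
       = (1 / (2 * lam * p + 1)) *\<^sub>R (x - c)"
proof -
  have "c = (1 / (2 * lam * p + 1)) *\<^sub>R ((2 * lam * p + 1) *\<^sub>R c)"
    using assms by simp
  also have "\<dots> = (1 / (2 * lam * p + 1)) *\<^sub>R ((2 * lam * p) *\<^sub>R c + c)"
    by (simp add: scaleR_add_left)
  finally show ?thesis
    by (metis add_diff_cancel_left' diff_diff_eq2 scaleR_right_diff_distrib)
qed

lemma sq_dist_prox_three_point:
  fixes x y z c :: "'a::real_inner"
  assumes lam: "lam > 0" and p: "p \<ge> 0"
    and y: "y = (1 / (2 * lam * p + 1)) *\<^sub>R (x + (2 * lam * p) *\<^sub>R c)"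
  shows "p * norm (y - c)^2 + norm (x - y)^2 / (2*lam) + norm (z - y)^2 / (2*lam)
       \<le> p * norm (z - c)^2 + norm (x - z)^2 / (2*lam)"
proof -
  have "2 * lam * p + 1 > 0"
    using lam p by (simp add: add_nonneg_pos)
  then have "(2 * lam * p + 1) *\<^sub>R y = x + (2 * lam * p) *\<^sub>R c"
    by (simp add: y)
  then have xy: "x - y = (2 * lam * p) *\<^sub>R (y - c)"
    by (simp add: algebra_simps scaleR_add_left)
  have "norm (z - c)^2 = norm (z - y)^2 + 2 * inner (z - y) (y - c) + norm (y - c)^2"
    using dot_norm[of "z - y" "y - c"] by simp
  moreover have "norm (x - z)^2 = norm (x - y)^2 - 2 * inner (x - y) (z - y) + norm (z - y)^2"
    using dot_norm_neg[of "x - y" "z - y"] by simp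
  moreover have "inner (x - y) (z - y) = 2 * lam * p * inner (z - y) (y - c)"
    by (simp add: xy inner_commute)
  ultimately have "p * norm (z - c)^2 + norm (x - z)^2 / (2*lam)
      = p * norm (y - c)^2 + norm (x - y)^2 / (2*lam) + norm (z - y)^2 / (2*lam) + p * norm (z - y)^2"
    using lam by (simp add: field_simps)
  then show ?thesis
    using p by simp
qed

lemma prox_weighted_sup_sq_dist:
  fixes f :: "'n::finite \<Rightarrow> 'a::real_inner \<Rightarrow> ereal" and c :: "'n \<Rightarrow> 'a" and x :: "'a ^ 'n"
  assumes lam: "lam > 0"
    and F: "F = (\<lambda>y. SUP p\<in>P. \<Sum>i\<in>UNIV. ereal (p $ i) * f i (y $ i))"
    and f: "\<And>i. f i = (\<lambda>z. ereal (norm (z - c i)^2))"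
  defines "ell \<equiv> \<lambda>p. \<Sum>i\<in>UNIV. p $ i / (1 + 2 * lam * p $ i) * norm (x $ i - c i)^2"
  assumes P: "convex P" and pb: "pb \<in> P" "\<forall>p\<in>P. ell p \<le> ell pb"
    and pb_nonneg: "\<And>i. 0 \<le> pb $ i"
  shows "prox lam F x = (\<chi> i. (1 / (2 * lam * pb $ i + 1)) *\<^sub>R (x $ i + (2 * lam * pb $ i) *\<^sub>R c i))"
proof -
  define y where
    "y = (\<chi> i. (1 / (2 * lam * pb $ i + 1)) *\<^sub>R (x $ i + (2 * lam * pb $ i) *\<^sub>R c i))"
  define r where "r i = norm (x $ i - c i)^2 / (1 + 2 * lam * pb $ i)^2" for i
  have pos: "1 + 2 * lam * pb $ i > 0" for i
    using lam pb_nonneg[of i] by (simp add: add_pos_nonneg)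
  have r: "norm (y $ i - c i)^2 = r i" for i
    using sq_dist_prox_diff[of lam "pb $ i" "x $ i" "c i"] pos[of i]
    by (simp add: y_def r_def power_divide add.commute)
  have "prox lam F x = y"
  proof (rule prox_weighted_sup_eqI[OF lam F f pb(1)])
    fix p assume "p \<in> P"
    have "((\<lambda>s. - (s / (1 + 2 * lam * s) * norm (x $ i - c i)^2)) has_real_derivative - r i)
        (at (pb $ i))" for i
      using pos[of i] by (auto intro!: derivative_eq_intros simp: r_def power2_eq_square field_simps)
    from separable_argmin_variational_ineq[OF this P pb(1) \<open>p \<in> P\<close>] pb(2)
    have "0 \<le> (\<Sum>i\<in>UNIV. - r i * (p $ i - pb $ i))"
      by (simp add: ell_def sum_negf)
    also have "\<dots> = (\<Sum>i\<in>UNIV. pb $ i * r i) - (\<Sum>i\<in>UNIV. p $ i * r i)"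
      unfolding sum_subtractf[symmetric] by (rule sum.cong) (simp_all add: algebra_simps)
    finally show "(\<Sum>i\<in>UNIV. p $ i * norm (y $ i - c i)^2)
        \<le> (\<Sum>i\<in>UNIV. pb $ i * norm (y $ i - c i)^2)"
      by (simp add: r)
  next
    fix i z
    show "pb $ i * norm (y $ i - c i)^2 + norm (x $ i - y $ i)^2 / (2*lam)
          + norm (z - y $ i)^2 / (2*lam)
        \<le> pb $ i * norm (z - c i)^2 + norm (x $ i - z)^2 / (2*lam)"
      by (rule sq_dist_prox_three_point[OF lam pb_nonneg]) (simp add: y_def)
  qed
  then show ?thesis
    by (simp add: y_def)
qed

lemma bounded_simplex_set: "bounded (simplex_set :: (real ^ 'n::finite) set)"
proof -
  have "simplex_set \<subseteq> cbox (0 :: real ^ 'n) (\<chi> i. 1)"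
  proof
    fix p :: "real ^ 'n" assume p: "p \<in> simplex_set"
    then have "p $ i \<le> (\<Sum>j\<in>UNIV. p $ j)" for i
      by (intro member_le_sum) (auto simp: simplex_set_def)
    with p show "p \<in> cbox 0 (\<chi> i. 1)"
      by (auto simp: mem_box_cart simplex_set_def)
  qed
  then show ?thesis
    using bounded_cbox bounded_subset by blast
qed

lemma convex_simplex_set: "convex (simplex_set :: (real ^ 'n::finite) set)"
  unfolding convex_def simplex_set_def
  by (auto simp: sum.distrib sum_distrib_left[symmetric])

theorem proposition2p1:
  fixes f :: "'n::finite \<Rightarrow> 'a::{real_inner, complete_space} \<Rightarrow> ereal"
    and P :: "(real ^ 'n) set"
    and F :: "'a ^ 'n \<Rightarrow> ereal"
    and x :: "'a ^ 'n"
    and lam :: real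
  assumes hf: "\<And>i. Gamma0 (f i)"
    and hP: "P \<noteq> {}" "closed P" "convex P" "P \<subseteq> simplex_set"
    and hF: "F = (\<lambda>y. SUP p\<in>P. \<Sum>i\<in>UNIV. ereal (p $ i) * f i (y $ i))"
    and hlam: "lam > 0"
  shows
    "(\<forall>(a :: 'n \<Rightarrow> 'a) (\<xi> :: 'n \<Rightarrow> real).
        (\<forall>i. a i \<noteq> 0) \<and> (\<forall>i. f i = (\<lambda>z. ereal (inner (a i) z + \<xi> i))) \<longrightarrow>
        (let D = (\<chi> i j. if i = j then lam * (norm (a i))^2 else 0) :: real ^ 'n ^ 'n;
             \<beta> = (\<chi> i. inner (a i) (x $ i) + \<xi> i) :: real ^ 'n;
             q = (\<lambda>p :: real ^ 'n. (1/2) * (p \<bullet> (D *v p)) - p \<bullet> \<beta>)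
         in \<exists>pb. (\<forall>p'. (p' \<in> P \<and> (\<forall>p\<in>P. q p' \<le> q p)) \<longleftrightarrow> p' = pb) \<and>
                 prox lam F x = (\<chi> i. x $ i - (lam * pb $ i) *\<^sub>R a i)))
     \<and>
     (\<forall>c :: 'n \<Rightarrow> 'a.
        P = simplex_set \<and> (\<forall>i. f i = (\<lambda>z. ereal ((norm (z - c i))^2))) \<longrightarrow>
        (let \<alpha> = (\<lambda>i. (norm (x $ i - c i))^2);
             ell = (\<lambda>p :: real ^ 'n. \<Sum>i\<in>UNIV. p $ i / (1 + 2 * lam * p $ i) * \<alpha> i)
         in \<forall>pb. pb \<in> simplex_set \<and> (\<forall>p\<in>simplex_set. ell p \<le> ell pb) \<longrightarrow>
              prox lam F x =
                (\<chi> i. (1 / (2 * lam * pb $ i + 1)) *\<^sub>R (x $ i + (2 * lam * pb $ i) *\<^sub>R c i))))"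
proof (intro conjI allI impI; unfold Let_def; (intro allI impI)?; elim conjE)
  fix a :: "'n \<Rightarrow> 'a" and \<xi> :: "'n \<Rightarrow> real"
  let ?q = "\<lambda>p. (1/2) * (p \<bullet> ((\<chi> i j. if i = j then lam * (norm (a i))^2 else 0) *v p))
                - p \<bullet> (\<chi> i. inner (a i) (x $ i) + \<xi> i)"
  assume "\<forall>i. a i \<noteq> 0" "\<forall>i. f i = (\<lambda>z. ereal (inner (a i) z + \<xi> i))"
  moreover have "compact P"
    using hP(2,4) bounded_simplex_set bounded_subset compact_eq_bounded_closed by blast
  ultimately show "\<exists>pb. (\<forall>p'. (p' \<in> P \<and> (\<forall>p\<in>P. ?q p' \<le> ?q p)) \<longleftrightarrow> p' = pb) \<and>
                  prox lam F x = (\<chi> i. x $ i - (lam * pb $ i) *\<^sub>R a i)"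
    using prox_weighted_sup_affine[OF hlam hF _ _ _ hP(3,1)] by blast
next
  fix c :: "'n \<Rightarrow> 'a" and pb :: "real ^ 'n"
  let ?ell = "\<lambda>p. \<Sum>i\<in>UNIV. p $ i / (1 + 2 * lam * p $ i) * (norm (x $ i - c i))^2"
  assume P: "P = simplex_set" and f: "\<forall>i. f i = (\<lambda>z. ereal ((norm (z - c i))^2))"
    and pb: "pb \<in> simplex_set" "\<forall>p\<in>simplex_set. ?ell p \<le> ?ell pb"
  show "prox lam F x = (\<chi> i. (1 / (2 * lam * pb $ i + 1)) *\<^sub>R (x $ i + (2 * lam * pb $ i) *\<^sub>R c i))"
    by (rule prox_weighted_sup_sq_dist[OF hlam hF])
      (use P f pb convex_simplex_set in \<open>auto simp: simplex_set_def\<close>)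
qed

end
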